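(* Let $U$ and $X$ be compact metric spaces, let $T:U\to U$ be a surjective map (not necessarily continuous), and let $g:U\times X\to X$ be a continuous driven system that is SI-invertible and has the unique solution property (USP). Let $h:\overleftarrow{U}\to X$ be the map defined below, let $r:\overleftarrow U\to\overleftarrow U$ be the shift $r(\ldots,u_{-3},u_{-2},u_{-1})=(\ldots,u_{-3},u_{-2})$, and set $H_2(\overleftarrow u):=(h(r\overleftarrow u),h(\overleftarrow u))$. Let $(\widehat U_T,\widehat T)$ be the inverse-limit system of $(U,T)$, $Y_T$ the relation induced by $(U,T)$, and $G_T:Y_T\to Y_T$ the map $(x_{n-1},x_n)\mapsto(x_n,x_{n+1})$ (for solutions driven by orbits of $T$). Then: (i) $H_2$ restricted to $\widehat U_T$ is a continuous surjection onto $Y_T$ satisfying $H_2\circ\widehat T=G_T\circ H_2$ on $\widehat U_T$; in particular $(Y_T,G_T)$ is topologically semi-conjugate to $(\widehat U_T,\widehat T)$. (ii) If moreover $T:U\to U$ is a homeomorphism, then $H_2|_{\widehat U_T}:\widehat U_T\to Y_T$ is a homeomorphism, so $(Y_T,G_T)$ is topologically conjugate to $(\widehat U_T,\widehat T)$ (and hence to $(U,T)$), and $g$ causally embeds $(U,T)$.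
   Context: An orbit of $T$ is a bi-infinite sequence $\{u_n\}_{n\in\mathbb Z}\subset U$ with $u_{n+1}=Tu_n$ for all $n$. A driven system is a continuous map $g:U\times X\to X$; a solution of $g$ for an input $\bar u=\{u_n\}_{n\in\mathbb Z}\subset U$ is a sequence $\{x_n\}_{n\in\mathbb Z}\subset X$ with $x_{n+1}=g(u_n,x_n)$ for all $n$ (by compactness at least one exists). $g$ is SI-invertible if $g(\cdot,x):U\to X$ is injective for every $x\in X$. $g$ has the unique solution property (USP) if for each input $\bar u$ there is exactly one solution. $\overleftarrow U:=\cdots\times U\times U$ denotes the set of left-infinite sequences $(\ldots,u_{-2},u_{-1})$ with the product topology. Under the USP the value $x_0$ of the unique solution depends only on the left-infinite part $(\ldots,u_{-2},u_{-1})$ of the input; $h:\overleftarrow U\to X$ is defined by $h(\ldots,u_{-2},u_{-1})=x_0$, where $\{x_n\}$ is the unique solution for any bi-infinite input extending $(\ldots,u_{-2},u_{-1})$. The reachable set $X_U$ is the set of all values $x_k$ of all solutions for all inputs. The inverse-limit space is $\widehat U_T:=\{(\ldots,u_{-2},u_{-1})\in\overleftarrow U: Tu_n=u_{n+1}\ \forall n\le -2\}$ and $\widehat T(\ldots,u_{-2},u_{-1}):=(\ldots,u_{-2},u_{-1},Tu_{-1})$ (reindexed so the last entry has index $-1$). The relation induced by $(U,T)$ is $Y_T:=\{(x_{n-1},x_n):\{x_k\}\text{ a solution of }g\text{ for some orbit of }T,\ n\in\mathbb Z\}$. A system $(V,S)$ is topologically semi-conjugate (resp. conjugate) to $(W,R)$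 if there is a continuous surjection (resp. homeomorphism) $\phi:W\to V$ with $\phi\circ R=S\circ\phi$. $g$ causally embeds $(U,T)$ if $h$ is continuous, surjective onto $X_U$, satisfies $h\circ\sigma_v=g(v,\cdot)\circ h$ for all $v\in U$ where $\sigma_v(\ldots,u_{-2},u_{-1})=(\ldots,u_{-2},u_{-1},v)$, and $H_2$ restricted to $\widehat U_T$ is a topological embedding into $X\times X$. *)

theory Defs
  imports "HOL-Analysis.Analysis"
begin

text \<open>A left-infinite sequence (..., u_{-2}, u_{-1}) is represented by s :: nat \<Rightarrow> _
  with s k = u_{-(k+1)}; the type nat \<Rightarrow> _ carries the product topology
  (instance from HOL-Analysis Function_Topology).\<close>

definition driven_system :: "'u::metric_space set \<Rightarrow> 'x::metric_space set \<Rightarrow> ('u \<Rightarrow> 'x \<Rightarrow> 'x) \<Rightarrow> bool" where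
  "driven_system U X g \<longleftrightarrow> continuous_on (U \<times> X) (\<lambda>(u, x). g u x) \<and> (\<forall>u\<in>U. \<forall>x\<in>X. g u x \<in> X)"

definition is_input :: "'u set \<Rightarrow> (int \<Rightarrow> 'u) \<Rightarrow> bool" where
  "is_input U ub \<longleftrightarrow> (\<forall>n. ub n \<in> U)"

definition is_solution :: "'x set \<Rightarrow> ('u \<Rightarrow> 'x \<Rightarrow> 'x) \<Rightarrow> (int \<Rightarrow> 'u) \<Rightarrow> (int \<Rightarrow> 'x) \<Rightarrow> bool" where
  "is_solution X g ub xb \<longleftrightarrow> (\<forall>n. xb n \<in> X) \<and> (\<forall>n. xb (n + 1) = g (ub n) (xb n))"

definition SI_invertible :: "'u set \<Rightarrow> 'x set \<Rightarrow> ('u \<Rightarrow> 'x \<Rightarrow> 'x) \<Rightarrow> bool" where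
  "SI_invertible U X g \<longleftrightarrow> (\<forall>x\<in>X. inj_on (\<lambda>u. g u x) U)"

definition USP :: "'u set \<Rightarrow> 'x set \<Rightarrow> ('u \<Rightarrow> 'x \<Rightarrow> 'x) \<Rightarrow> bool" where
  "USP U X g \<longleftrightarrow> (\<forall>ub. is_input U ub \<longrightarrow> (\<exists>!xb. is_solution X g ub xb))"

definition left_seqs :: "'u set \<Rightarrow> (nat \<Rightarrow> 'u) set" where
  "left_seqs U = {s. \<forall>k. s k \<in> U}"

definition extends_left :: "(int \<Rightarrow> 'u) \<Rightarrow> (nat \<Rightarrow> 'u) \<Rightarrow> bool" where
  "extends_left ub s \<longleftrightarrow> (\<forall>n<0. ub n = s (nat (- n - 1)))"

definition hmap :: "'u set \<Rightarrow> 'x set \<Rightarrow> ('u \<Rightarrow> 'x \<Rightarrow> 'x) \<Rightarrow> (nat \<Rightarrow> 'u) \<Rightarrow> 'x" where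
  "hmap U X g s = (THE x. \<exists>ub xb. is_input U ub \<and> extends_left ub s \<and> is_solution X g ub xb \<and> xb 0 = x)"

definition rshift :: "(nat \<Rightarrow> 'u) \<Rightarrow> (nat \<Rightarrow> 'u)" where
  "rshift s = (\<lambda>k. s (Suc k))"

definition append_right :: "'u \<Rightarrow> (nat \<Rightarrow> 'u) \<Rightarrow> (nat \<Rightarrow> 'u)" where
  "append_right v s = (\<lambda>k. case k of 0 \<Rightarrow> v | Suc j \<Rightarrow> s j)"

definition H2 :: "'u set \<Rightarrow> 'x set \<Rightarrow> ('u \<Rightarrow> 'x \<Rightarrow> 'x) \<Rightarrow> (nat \<Rightarrow> 'u) \<Rightarrow> 'x \<times> 'x" where
  "H2 U X g s = (hmap U X g (rshift s), hmap U X g s)"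

definition inv_limit :: "'u set \<Rightarrow> ('u \<Rightarrow> 'u) \<Rightarrow> (nat \<Rightarrow> 'u) set" where
  "inv_limit U T = {s. (\<forall>k. s k \<in> U) \<and> (\<forall>k. T (s (Suc k)) = s k)}"

definition inv_limit_map :: "('u \<Rightarrow> 'u) \<Rightarrow> (nat \<Rightarrow> 'u) \<Rightarrow> (nat \<Rightarrow> 'u)" where
  "inv_limit_map T s = append_right (T (s 0)) s"

definition is_orbit :: "'u set \<Rightarrow> ('u \<Rightarrow> 'u) \<Rightarrow> (int \<Rightarrow> 'u) \<Rightarrow> bool" where
  "is_orbit U T ub \<longleftrightarrow> (\<forall>n. ub n \<in> U) \<and> (\<forall>n. ub (n + 1) = T (ub n))"

definition induced_rel :: "'u set \<Rightarrow> 'x set \<Rightarrow> ('u \<Rightarrow> 'x \<Rightarrow> 'x) \<Rightarrow> ('u \<Rightarrow> 'u) \<Rightarrow> ('x \<times> 'x) set" where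
  "induced_rel U X g T = {(xb (n - 1), xb n) | ub xb n. is_orbit U T ub \<and> is_solution X g ub xb}"

definition induced_map :: "'u set \<Rightarrow> 'x set \<Rightarrow> ('u \<Rightarrow> 'x \<Rightarrow> 'x) \<Rightarrow> ('u \<Rightarrow> 'u) \<Rightarrow> 'x \<times> 'x \<Rightarrow> 'x \<times> 'x" where
  "induced_map U X g T p = (THE q. \<exists>ub xb n. is_orbit U T ub \<and> is_solution X g ub xb
       \<and> p = (xb (n - 1), xb n) \<and> q = (xb n, xb (n + 1)))"

definition reachable :: "'u set \<Rightarrow> 'x set \<Rightarrow> ('u \<Rightarrow> 'x \<Rightarrow> 'x) \<Rightarrow> 'x set" where
  "reachable U X g = {xb k | ub xb k. is_input U ub \<and> is_solution X g ub xb}"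

definition top_semiconj_via :: "'v::topological_space set \<Rightarrow> ('v \<Rightarrow> 'v) \<Rightarrow> 'w::topological_space set \<Rightarrow> ('w \<Rightarrow> 'w) \<Rightarrow> ('w \<Rightarrow> 'v) \<Rightarrow> bool" where
  "top_semiconj_via V S W R \<phi> \<longleftrightarrow> continuous_on W \<phi> \<and> \<phi> ` W = V \<and> (\<forall>w\<in>W. \<phi> (R w) = S (\<phi> w))"

definition top_conj_via :: "'v::topological_space set \<Rightarrow> ('v \<Rightarrow> 'v) \<Rightarrow> 'w::topological_space set \<Rightarrow> ('w \<Rightarrow> 'w) \<Rightarrow> ('w \<Rightarrow> 'v) \<Rightarrow> bool" where
  "top_conj_via V S W R \<phi> \<longleftrightarrow> (\<exists>\<psi>. homeomorphism W V \<phi> \<psi>) \<and> (\<forall>w\<in>W. \<phi> (R w) = S (\<phi> w))"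

definition causally_embeds :: "'u::metric_space set \<Rightarrow> 'x::metric_space set \<Rightarrow> ('u \<Rightarrow> 'x \<Rightarrow> 'x) \<Rightarrow> ('u \<Rightarrow> 'u) \<Rightarrow> bool" where
  "causally_embeds U X g T \<longleftrightarrow>
     continuous_on (left_seqs U) (hmap U X g)
   \<and> hmap U X g ` left_seqs U = reachable U X g
   \<and> (\<forall>v\<in>U. \<forall>s\<in>left_seqs U. hmap U X g (append_right v s) = g v (hmap U X g s))
   \<and> (\<exists>\<psi>. homeomorphism (inv_limit U T) (H2 U X g ` inv_limit U T) (H2 U X g) \<psi>)"

end

theory Submission
  imports Defs
begin

text \<open>Under the USP, \<open>h\<close> sends a left-infinite input to the present state of the unique
  solution it drives. Hence, along an orbit of \<open>T\<close>, \<open>H\<^sub>2\<close> maps the past before time \<open>n\<close> to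
  \<open>(x\<^sub>n\<^sub>-\<^sub>1, x\<^sub>n)\<close>, which gives surjectivity onto \<open>Y\<^sub>T\<close> and the equivariance.
  Continuity of \<open>h\<close> comes from compactness: the pairs (input, backward solution) form a
  compact set, which projects onto the graph of \<open>h\<close>. SI-invertibility recovers \<open>u\<^sub>n\<^sub>-\<^sub>1\<close> from
  \<open>(x\<^sub>n\<^sub>-\<^sub>1, x\<^sub>n)\<close>; this makes \<open>G\<^sub>T\<close> well defined and, for injective \<open>T\<close>, makes \<open>H\<^sub>2\<close> injective
  on the inverse limit. If \<open>T\<close> is a homeomorphism, \<open>u \<mapsto> (T\<^sup>-\<^sup>k u)\<^sub>k\<close> identifies \<open>U\<close> with the
  inverse limit, which is therefore compact, so the continuous bijection \<open>H\<^sub>2\<close> is a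
  homeomorphism.\<close>

lemma compact_sequences:
  fixes S :: "'a::topological_space set"
  assumes "compact S"
  shows "compact {s::nat \<Rightarrow> 'a. \<forall>k. s k \<in> S}"
proof -
  have "compactin (product_topology (\<lambda>_. euclidean) UNIV) (PiE UNIV (\<lambda>_::nat. S))"
    using assms by (simp add: compactin_PiE)
  moreover have "PiE UNIV (\<lambda>_::nat. S) = {s. \<forall>k. s k \<in> S}"
    by (auto simp: PiE_iff)
  ultimately show ?thesis by (simp add: euclidean_product_topology)
qed

lemma continuous_on_compact_graph:
  fixes f :: "'a::t2_space \<Rightarrow> 'b::topological_space"
  assumes "compact ((\<lambda>x. (x, f x)) ` S)"
  shows "continuous_on S f"
  unfolding continuous_on_closed_invariant
proof (intro allI impI)
  fix B :: "'b set"
  assume "closed B"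
  let ?A = "fst ` ((\<lambda>x. (x, f x)) ` S \<inter> UNIV \<times> B)"
  have "compact ((\<lambda>x. (x, f x)) ` S \<inter> UNIV \<times> B)"
    using assms \<open>closed B\<close> by (simp add: compact_Int_closed closed_Times)
  then have "compact ?A"
    by (rule compact_continuous_image[OF continuous_on_fst[OF continuous_on_id]])
  moreover have "?A \<inter> S = f -` B \<inter> S" by force
  ultimately show "\<exists>A. closed A \<and> A \<inter> S = f -` B \<inter> S"
    using compact_imp_closed by blast
qed

lemma funpow_in: "f ` S \<subseteq> S \<Longrightarrow> x \<in> S \<Longrightarrow> (f ^^ n) x \<in> S"
  by (induction n) auto

lemma continuous_on_funpow:
  assumes "continuous_on S f" and "f ` S \<subseteq> S"
  shows "continuous_on S (f ^^ n)"
proof (induction n)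
  case (Suc n)
  have "(f ^^ n) ` S \<subseteq> S" using funpow_in[OF assms(2)] by blast
  then show ?case
    using continuous_on_compose2[OF assms(1) Suc.IH] by (simp add: comp_def)
qed (simp add: continuous_on_id)

lemma top_conj_via_compose:
  assumes conj: "top_conj_via V S W R \<phi>" and hom: "homeomorphism W' W e e'"
    and equivariant: "\<forall>w\<in>W'. e (R' w) = R (e w)"
  shows "top_conj_via V S W' R' (\<phi> \<circ> e)"
proof -
  obtain \<psi> where \<psi>: "homeomorphism W V \<phi> \<psi>" and "\<forall>w\<in>W. \<phi> (R w) = S (\<phi> w)"
    using conj by (auto simp: top_conj_via_def)
  moreover have "e w \<in> W" if "w \<in> W'" for w
    using hom that homeomorphism_image1 by blast
  moreover have "homeomorphism W' V (\<phi> \<circ> e) (e' \<circ> \<psi>)"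
    using hom \<psi> by (rule homeomorphism_compose)
  ultimately show ?thesis
    unfolding top_conj_via_def using equivariant by auto
qed

definition past :: "(int \<Rightarrow> 'a) \<Rightarrow> int \<Rightarrow> nat \<Rightarrow> 'a" where
  "past ub m = (\<lambda>k. ub (m - 1 - int k))"

definition constant_extension :: "(nat \<Rightarrow> 'a) \<Rightarrow> int \<Rightarrow> 'a" where
  "constant_extension s = (\<lambda>n. if n < 0 then s (nat (- n - 1)) else s 0)"

lemma extends_left_iff_past: "extends_left ub s \<longleftrightarrow> past ub 0 = s"
proof
  assume "extends_left ub s"
  then show "past ub 0 = s"
    by (auto simp: extends_left_def past_def)
next
  assume past: "past ub 0 = s"
  show "extends_left ub s"
    unfolding extends_left_def
  proof (intro allI impI)
    fix n :: int
    assume "n < 0"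
    then have "n = 0 - 1 - int (nat (- n - 1))" by simp
    then show "ub n = s (nat (- n - 1))"
      using past by (metis past_def)
  qed
qed

lemma past_constant_extension: "past (constant_extension s) 0 = s"
  by (auto simp: past_def constant_extension_def)

lemma rshift_past: "rshift (past ub m) = past ub (m - 1)"
  by (simp add: rshift_def past_def algebra_simps)

lemma past_in_left_seqs: "is_input U ub \<Longrightarrow> past ub m \<in> left_seqs U"
  by (simp add: is_input_def left_seqs_def past_def)

lemma constant_extension_is_input: "s \<in> left_seqs U \<Longrightarrow> is_input U (constant_extension s)"
  by (simp add: is_input_def left_seqs_def constant_extension_def)

lemma inv_limit_subset_left_seqs: "inv_limit U T \<subseteq> left_seqs U"
  by (auto simp: inv_limit_def left_seqs_def)

lemma past_in_inv_limit:
  assumes "is_orbit U T ub"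
  shows "past ub m \<in> inv_limit U T"
proof -
  have "T (ub (m - 1 - int (Suc k))) = ub (m - 1 - int k)" for k
    using assms unfolding is_orbit_def by (metis diff_add_cancel diff_diff_eq of_nat_Suc)
  then show ?thesis
    using assms by (simp add: inv_limit_def is_orbit_def past_def)
qed

lemma inv_limit_map_past:
  assumes "is_orbit U T ub"
  shows "inv_limit_map T (past ub m) = past ub (m + 1)"
proof
  fix k
  have "T (ub (m - 1)) = ub m"
    using assms unfolding is_orbit_def by (metis diff_add_cancel)
  then show "inv_limit_map T (past ub m) k = past ub (m + 1) k"
    by (cases k) (simp_all add: inv_limit_map_def append_right_def past_def algebra_simps)
qed

lemma append_right_rshift: "append_right (s 0) (rshift s) = s"
  by (rule ext) (simp add: append_right_def rshift_def split: nat.split)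

lemma orbit_is_input: "is_orbit U T ub \<Longrightarrow> is_input U ub"
  by (simp add: is_orbit_def is_input_def)

lemma inv_limit_past_orbit:
  assumes TU: "T ` U \<subseteq> U" and s: "s \<in> inv_limit U T"
  obtains ub where "is_orbit U T ub" and "past ub 0 = s"
proof -
  have s_in_U: "s k \<in> U" and s_T: "T (s (Suc k)) = s k" for k
    using s by (auto simp: inv_limit_def)
  define ub where "ub n = (if n < 0 then s (nat (- n - 1)) else (T ^^ Suc (nat n)) (s 0))" for n
  have "ub (n + 1) = T (ub n)" for n
  proof -
    consider "n < -1" | "n = -1" | "n \<ge> 0" by linarith
    then show ?thesis
    proof cases
      case 1
      then have "nat (- n - 1) = Suc (nat (- (n + 1) - 1))" by simp
      then show ?thesis using 1 by (simp add: ub_def s_T)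
    next
      case 3
      then have "nat (n + 1) = Suc (nat n)" by simp
      then show ?thesis using 3 by (simp add: ub_def)
    qed (simp add: ub_def)
  qed
  moreover have "ub n \<in> U" for n
    using s_in_U funpow_in[OF TU s_in_U, of "Suc (nat n)"] by (simp add: ub_def)
  ultimately have "is_orbit U T ub"
    by (simp add: is_orbit_def)
  moreover have "past ub 0 = s"
    by (simp add: past_def ub_def)
  ultimately show thesis
    using that by blast
qed

lemma homeomorphism_inv_limit:
  assumes hom: "homeomorphism U U T Tinv"
  shows "homeomorphism U (inv_limit U T) (\<lambda>u k. (Tinv ^^ k) u) (\<lambda>s. s 0)"
proof
  have Tinv_U: "Tinv ` U \<subseteq> U" and Tinv_cont: "continuous_on U Tinv"
    using hom by (auto simp: homeomorphism_def)
  show "continuous_on U (\<lambda>u k. (Tinv ^^ k) u)"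
    by (intro continuous_on_coordinatewise_then_product continuous_on_funpow[OF Tinv_cont Tinv_U])
  show "continuous_on (inv_limit U T) (\<lambda>s. s 0)"
    by (rule continuous_on_subset[OF continuous_on_product_coordinates subset_UNIV])
  show "(\<lambda>u k. (Tinv ^^ k) u) ` U \<subseteq> inv_limit U T"
  proof clarify
    fix u
    assume "u \<in> U"
    then have iterates_in_U: "(Tinv ^^ k) u \<in> U" for k
      by (rule funpow_in[OF Tinv_U])
    then have "T ((Tinv ^^ Suc k) u) = (Tinv ^^ k) u" for k
      using homeomorphism_apply2[OF hom] by simp
    then show "(\<lambda>k. (Tinv ^^ k) u) \<in> inv_limit U T"
      using iterates_in_U by (simp add: inv_limit_def)
  qed
  show "(\<lambda>s. s 0) ` inv_limit U T \<subseteq> U"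
    by (auto simp: inv_limit_def)
  show "(\<lambda>k. (Tinv ^^ k) u) 0 = u" for u
    by simp
  show "(\<lambda>k. (Tinv ^^ k) (s 0)) = s" if s: "s \<in> inv_limit U T" for s
  proof
    fix k
    show "(Tinv ^^ k) (s 0) = s k"
    proof (induction k)
      case (Suc k)
      have "s (Suc k) \<in> U" and "T (s (Suc k)) = s k"
        using s by (auto simp: inv_limit_def)
      then have "Tinv (s k) = s (Suc k)"
        using homeomorphism_apply1[OF hom] by metis
      then show ?case
        using Suc by simp
    qed simp
  qed
qed

lemma inv_limit_map_funpow_inverse:
  assumes hom: "homeomorphism U U T Tinv" and u: "u \<in> U"
  shows "inv_limit_map T (\<lambda>k. (Tinv ^^ k) u) = (\<lambda>k. (Tinv ^^ k) (T u))"
proof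
  fix k
  have "(Tinv ^^ Suc j) (T u) = (Tinv ^^ j) u" for j
    using homeomorphism_apply1[OF hom u] by (simp only: funpow_Suc_right comp_def)
  then show "inv_limit_map T (\<lambda>k. (Tinv ^^ k) u) k = (Tinv ^^ k) (T u)"
    by (simp add: inv_limit_map_def append_right_def split: nat.split)
qed

text \<open>SI-invertibility recovers \<open>u\<^sub>n\<^sub>-\<^sub>1\<close> from \<open>(x\<^sub>n\<^sub>-\<^sub>1, x\<^sub>n)\<close>, the orbit then fixes
  \<open>u\<^sub>n = T u\<^sub>n\<^sub>-\<^sub>1\<close>, and hence \<open>x\<^sub>n\<^sub>+\<^sub>1 = g u\<^sub>n x\<^sub>n\<close>.\<close>
lemma orbit_solutions_next_eq:
  assumes SI: "SI_invertible U X g"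
    and orbit: "is_orbit U T ub" and sol: "is_solution X g ub xb"
    and orbit': "is_orbit U T ub'" and sol': "is_solution X g ub' xb'"
    and prev: "xb (n - 1) = xb' (m - 1)" and now: "xb n = xb' m"
  shows "xb (n + 1) = xb' (m + 1)"
proof -
  have "xb ((n - 1) + 1) = g (ub (n - 1)) (xb (n - 1))"
    and "xb' ((m - 1) + 1) = g (ub' (m - 1)) (xb' (m - 1))"
    using sol sol' unfolding is_solution_def by blast+
  then have "g (ub (n - 1)) (xb (n - 1)) = g (ub' (m - 1)) (xb (n - 1))"
    using prev now by simp
  moreover have "xb (n - 1) \<in> X" and "ub (n - 1) \<in> U" and "ub' (m - 1) \<in> U"
    using sol orbit orbit' by (auto simp: is_solution_def is_orbit_def)
  ultimately have "ub (n - 1) = ub' (m - 1)"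
    using SI unfolding SI_invertible_def inj_on_def by blast
  moreover have "ub ((n - 1) + 1) = T (ub (n - 1))" and "ub' ((m - 1) + 1) = T (ub' (m - 1))"
    using orbit orbit' unfolding is_orbit_def by blast+
  ultimately have "ub n = ub' m"
    by simp
  moreover have "xb (n + 1) = g (ub n) (xb n)" and "xb' (m + 1) = g (ub' m) (xb' m)"
    using sol sol' unfolding is_solution_def by blast+
  ultimately show ?thesis
    using now by simp
qed

lemma induced_map_solution:
  assumes SI: "SI_invertible U X g" and orbit: "is_orbit U T ub" and sol: "is_solution X g ub xb"
  shows "induced_map U X g T (xb (n - 1), xb n) = (xb n, xb (n + 1))"
  unfolding induced_map_def
proof (rule the_equality)
  show "\<exists>ub' xb' m. is_orbit U T ub' \<and> is_solution X g ub' xb'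
      \<and> (xb (n - 1), xb n) = (xb' (m - 1), xb' m) \<and> (xb n, xb (n + 1)) = (xb' m, xb' (m + 1))"
    using orbit sol by blast
next
  fix q
  assume "\<exists>ub' xb' m. is_orbit U T ub' \<and> is_solution X g ub' xb'
      \<and> (xb (n - 1), xb n) = (xb' (m - 1), xb' m) \<and> q = (xb' m, xb' (m + 1))"
  then obtain ub' xb' m where "is_orbit U T ub'" and "is_solution X g ub' xb'"
    and "xb (n - 1) = xb' (m - 1)" and "xb n = xb' m" and "q = (xb' m, xb' (m + 1))"
    by auto
  then show "q = (xb n, xb (n + 1))"
    using orbit_solutions_next_eq[OF SI orbit sol] by simp
qed

primrec forward_states :: "('u \<Rightarrow> 'x \<Rightarrow> 'x) \<Rightarrow> (int \<Rightarrow> 'u) \<Rightarrow> 'x \<Rightarrow> nat \<Rightarrow> 'x" where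
  "forward_states g ub x 0 = x"
| "forward_states g ub x (Suc n) = g (ub (int n)) (forward_states g ub x n)"

locale usp_system =
  fixes U :: "'u::metric_space set" and X :: "'x::metric_space set" and g :: "'u \<Rightarrow> 'x \<Rightarrow> 'x"
  assumes driven: "driven_system U X g" and usp: "USP U X g"
begin

lemma g_in_X: "u \<in> U \<Longrightarrow> x \<in> X \<Longrightarrow> g u x \<in> X"
  using driven by (auto simp: driven_system_def)

text \<open>\<open>left_solution s z\<close>: \<open>z k\<close> is the state at time \<open>-k\<close> of a solution driven by the
  left-infinite input \<open>s\<close>. The recursion is oriented towards \<open>z k\<close> so that it is a
  terminating simp rule.\<close>
definition left_solution :: "(nat \<Rightarrow> 'u) \<Rightarrow> (nat \<Rightarrow> 'x) \<Rightarrow> bool" where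
  "left_solution s z \<longleftrightarrow> (\<forall>k. z k \<in> X) \<and> (\<forall>k. g (s k) (z (Suc k)) = z k)"

lemma solution_past:
  assumes "is_solution X g ub xb"
  shows "left_solution (past ub m) (past xb (m + 1))"
  unfolding left_solution_def
proof (intro conjI allI)
  fix k
  show "past xb (m + 1) k \<in> X"
    using assms by (simp add: is_solution_def past_def)
  have "xb ((m - 1 - int k) + 1) = g (ub (m - 1 - int k)) (xb (m - 1 - int k))"
    using assms unfolding is_solution_def by blast
  moreover have "past xb (m + 1) k = xb ((m - 1 - int k) + 1)"
    and "past xb (m + 1) (Suc k) = xb (m - 1 - int k)"
    by (simp_all add: past_def algebra_simps)
  ultimately show "g (past ub m k) (past xb (m + 1) (Suc k)) = past xb (m + 1) k"
    by (simp add: past_def)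
qed

lemma left_solution_extends:
  assumes input: "is_input U ub" and z: "left_solution (past ub 0) z"
  shows "\<exists>xb. is_solution X g ub xb \<and> xb 0 = z 0"
proof -
  define xb where
    "xb n = (if n \<le> 0 then z (nat (- n)) else forward_states g ub (z 0) (nat n))" for n
  have z_in_X: "z k \<in> X" for k
    using z by (simp add: left_solution_def)
  have forward_in_X: "forward_states g ub (z 0) n \<in> X" for n
    using z_in_X input by (induction n) (auto simp: is_input_def g_in_X)
  have "xb (n + 1) = g (ub n) (xb n)" for n
  proof (cases "n < 0")
    case True
    define k where "k = nat (- n - 1)"
    have n: "n = - 1 - int k" using True by (simp add: k_def)
    have "g (past ub 0 k) (z (Suc k)) = z k" using z by (simp add: left_solution_def)
    then have "g (ub n) (z (Suc k)) = z k" using n by (simp add: past_def)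
    moreover have "nat (- n) = Suc k" "nat (- (n + 1)) = k" using n by simp_all
    ultimately show ?thesis using True by (simp add: xb_def)
  next
    case False
    then have "nat (n + 1) = Suc (nat n)" by simp
    then show ?thesis using False by (simp add: xb_def)
  qed
  moreover have "xb n \<in> X" for n
    using z_in_X forward_in_X by (simp add: xb_def)
  ultimately have "is_solution X g ub xb"
    unfolding is_solution_def by blast
  moreover have "xb 0 = z 0" by (simp add: xb_def)
  ultimately show ?thesis by blast
qed

lemma left_solution_append_right:
  assumes z: "left_solution s z" and v: "v \<in> U"
  shows "left_solution (append_right v s) (append_right (g v (z 0)) z)"
  unfolding left_solution_def
proof (intro conjI allI)
  fix k
  have z_in_X: "z j \<in> X" for j
    using z unfolding left_solution_def by blast
  then show "append_right (g v (z 0)) z k \<in> X"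
    using g_in_X[OF v] by (simp add: append_right_def split: nat.split)
  show "g (append_right v s k) (append_right (g v (z 0)) z (Suc k))
      = append_right (g v (z 0)) z k"
    using z by (simp add: left_solution_def append_right_def split: nat.split)
qed

lemma hmap_eqI:
  assumes s: "s \<in> left_seqs U" and z: "left_solution s z"
  shows "hmap U X g s = z 0"
  unfolding hmap_def
proof (rule the_equality)
  have input: "is_input U (constant_extension s)"
    using s by (rule constant_extension_is_input)
  moreover have "left_solution (past (constant_extension s) 0) z"
    using z by (simp add: past_constant_extension)
  ultimately obtain xb where "is_solution X g (constant_extension s) xb" and "xb 0 = z 0"
    using left_solution_extends by blast
  then show "\<exists>ub xb. is_input U ub \<and> extends_left ub s \<and> is_solution X g ub xb \<and> xb 0 = z 0"
    using input past_constant_extension extends_left_iff_past by blast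
next
  fix x
  assume "\<exists>ub xb. is_input U ub \<and> extends_left ub s \<and> is_solution X g ub xb \<and> xb 0 = x"
  then obtain ub xb where input: "is_input U ub" and "past ub 0 = s"
    and sol: "is_solution X g ub xb" and "xb 0 = x"
    by (auto simp: extends_left_iff_past)
  then obtain xb' where "is_solution X g ub xb'" and "xb' 0 = z 0"
    using left_solution_extends z by blast
  moreover have "\<exists>!xb. is_solution X g ub xb"
    using usp input by (simp add: USP_def)
  ultimately show "x = z 0"
    using sol \<open>xb 0 = x\<close> by blast
qed

lemma left_solution_exists:
  assumes "s \<in> left_seqs U"
  obtains z where "left_solution s z"
proof -
  obtain xb where "is_solution X g (constant_extension s) xb"
    using usp constant_extension_is_input[OF assms] by (auto simp: USP_def)
  then have "left_solution (past (constant_extension s) 0) (past xb 1)"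
    using solution_past[of _ _ 0] by simp
  then show thesis
    using that by (simp add: past_constant_extension)
qed

lemma hmap_past:
  assumes "is_input U ub" and "is_solution X g ub xb"
  shows "hmap U X g (past ub m) = xb m"
  using hmap_eqI[OF past_in_left_seqs[OF assms(1)] solution_past[OF assms(2)]]
  by (simp add: past_def)

lemma hmap_in_X:
  assumes "s \<in> left_seqs U"
  shows "hmap U X g s \<in> X"
proof -
  obtain z where z: "left_solution s z"
    using left_solution_exists[OF assms] .
  then have "z 0 \<in> X"
    by (simp add: left_solution_def)
  then show ?thesis
    using hmap_eqI[OF assms z] by simp
qed

lemma hmap_append_right:
  assumes s: "s \<in> left_seqs U" and v: "v \<in> U"
  shows "hmap U X g (append_right v s) = g v (hmap U X g s)"
proof -
  obtain z where z: "left_solution s z"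
    using left_solution_exists[OF s] .
  have "append_right v s \<in> left_seqs U"
    using s v by (auto simp: left_seqs_def append_right_def split: nat.split)
  then have "hmap U X g (append_right v s) = g v (z 0)"
    using hmap_eqI[OF _ left_solution_append_right[OF z v]] by (simp add: append_right_def)
  then show ?thesis
    using hmap_eqI[OF s z] by simp
qed

lemma hmap_image_left_seqs: "hmap U X g ` left_seqs U = reachable U X g"
proof (intro equalityI subsetI)
  fix x
  assume "x \<in> hmap U X g ` left_seqs U"
  then obtain s where s: "s \<in> left_seqs U" and x: "x = hmap U X g s"
    by blast
  have input: "is_input U (constant_extension s)"
    using s by (rule constant_extension_is_input)
  then obtain xb where sol: "is_solution X g (constant_extension s) xb"
    using usp by (auto simp: USP_def)
  have "x = xb 0"
    using hmap_past[OF input sol, of 0] x by (simp add: past_constant_extension)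
  then show "x \<in> reachable U X g"
    unfolding reachable_def using input sol by blast
next
  fix x
  assume "x \<in> reachable U X g"
  then obtain ub xb k where input: "is_input U ub" and sol: "is_solution X g ub xb"
    and "x = xb k"
    unfolding reachable_def by blast
  then have "x = hmap U X g (past ub k)"
    using hmap_past by simp
  then show "x \<in> hmap U X g ` left_seqs U"
    using past_in_left_seqs[OF input] by blast
qed

lemma compact_left_solutions:
  assumes "compact U" and "compact X"
  shows "compact {(s, z). s \<in> left_seqs U \<and> left_solution s z}"
proof -
  define K where "K = left_seqs U \<times> left_seqs X"
  have "compact K"
    unfolding K_def left_seqs_def using assms by (intro compact_Times compact_sequences)
  define step where "step k p = (snd p k, g (fst p k) (snd p (Suc k)))"
    for k and p :: "(nat \<Rightarrow> 'u) \<times> (nat \<Rightarrow> 'x)"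
  have g_cont: "continuous_on (U \<times> X) (\<lambda>(u, x). g u x)"
    using driven by (simp add: driven_system_def)
  have coordinates: "continuous_on K (\<lambda>p. fst p k)" "continuous_on K (\<lambda>p. snd p k)" for k
    by (rule continuous_on_product_then_coordinatewise[OF continuous_on_fst[OF continuous_on_id]],
        rule continuous_on_product_then_coordinatewise[OF continuous_on_snd[OF continuous_on_id]])
  have "(\<lambda>p. (fst p k, snd p (Suc k))) ` K \<subseteq> U \<times> X" for k
    by (auto simp: K_def left_seqs_def)
  then have "continuous_on K (\<lambda>p. g (fst p k) (snd p (Suc k)))" for k
    using continuous_on_compose2[OF g_cont continuous_on_Pair[OF coordinates]] by simp
  then have "continuous_on K (step k)" for k
    unfolding step_def using coordinates(2) by (intro continuous_on_Pair)
  then have "closed (K \<inter> step k -` {y. \<exists>x. y = (x, x)})" for k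
    using compact_imp_closed[OF \<open>compact K\<close>] closed_diagonal by (rule continuous_closed_preimage)
  then have closed_steps: "closed (\<Inter>k. K \<inter> step k -` {y. \<exists>x. y = (x, x)})"
    by (intro closed_INT) simp
  have "{(s, z). s \<in> left_seqs U \<and> left_solution s z}
      = K \<inter> (\<Inter>k. K \<inter> step k -` {y. \<exists>x. y = (x, x)})"
    by (auto simp: K_def left_solution_def left_seqs_def step_def)
  then show ?thesis
    using compact_Int_closed[OF \<open>compact K\<close> closed_steps] by simp
qed

lemma continuous_on_hmap:
  assumes "compact U" and "compact X"
  shows "continuous_on (left_seqs U) (hmap U X g)"
proof (rule continuous_on_compact_graph)
  let ?S = "{(s, z). s \<in> left_seqs U \<and> left_solution s z}"
  have graph: "(\<lambda>s. (s, hmap U X g s)) ` left_seqs U = (\<lambda>p. (fst p, snd p 0)) ` ?S"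
  proof (intro equalityI subsetI)
    fix p
    assume "p \<in> (\<lambda>s. (s, hmap U X g s)) ` left_seqs U"
    then obtain s where s: "s \<in> left_seqs U" and p: "p = (s, hmap U X g s)"
      by blast
    obtain z where "left_solution s z"
      using left_solution_exists[OF s] .
    then show "p \<in> (\<lambda>p. (fst p, snd p 0)) ` ?S"
      using s p hmap_eqI[OF s] by force
  next
    fix p
    assume "p \<in> (\<lambda>p. (fst p, snd p 0)) ` ?S"
    then show "p \<in> (\<lambda>s. (s, hmap U X g s)) ` left_seqs U"
      using hmap_eqI by force
  qed
  have "continuous_on ?S (\<lambda>p. (fst p, snd p 0))"
    by (intro continuous_on_Pair continuous_on_fst continuous_on_id
        continuous_on_product_then_coordinatewise[OF continuous_on_snd[OF continuous_on_id]])
  then show "compact ((\<lambda>s. (s, hmap U X g s)) ` left_seqs U)"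
    unfolding graph using compact_left_solutions[OF assms] by (rule compact_continuous_image)
qed

lemma H2_past:
  assumes "is_input U ub" and "is_solution X g ub xb"
  shows "H2 U X g (past ub m) = (xb (m - 1), xb m)"
  using assms by (simp add: H2_def rshift_past hmap_past)

lemma H2_image_inv_limit:
  assumes TU: "T ` U \<subseteq> U"
  shows "H2 U X g ` inv_limit U T = induced_rel U X g T"
proof (intro equalityI subsetI)
  fix p
  assume "p \<in> H2 U X g ` inv_limit U T"
  then obtain ub where orbit: "is_orbit U T ub" and p: "p = H2 U X g (past ub 0)"
    using inv_limit_past_orbit[OF TU] by (metis imageE)
  obtain xb where sol: "is_solution X g ub xb"
    using usp orbit_is_input[OF orbit] by (auto simp: USP_def)
  have "p = (xb (0 - 1), xb 0)"
    using H2_past[OF orbit_is_input[OF orbit] sol] p by simp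
  then show "p \<in> induced_rel U X g T"
    unfolding induced_rel_def using orbit sol by blast
next
  fix p
  assume "p \<in> induced_rel U X g T"
  then obtain ub xb n where orbit: "is_orbit U T ub" and sol: "is_solution X g ub xb"
    and "p = (xb (n - 1), xb n)"
    unfolding induced_rel_def by blast
  then have "p = H2 U X g (past ub n)"
    using H2_past[OF orbit_is_input[OF orbit] sol] by simp
  then show "p \<in> H2 U X g ` inv_limit U T"
    using past_in_inv_limit[OF orbit] by blast
qed

lemma H2_inv_limit_map:
  assumes TU: "T ` U \<subseteq> U" and SI: "SI_invertible U X g" and s: "s \<in> inv_limit U T"
  shows "H2 U X g (inv_limit_map T s) = induced_map U X g T (H2 U X g s)"
proof -
  obtain ub where orbit: "is_orbit U T ub" and s_past: "past ub 0 = s"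
    using inv_limit_past_orbit[OF TU s] .
  have input: "is_input U ub"
    using orbit by (rule orbit_is_input)
  then obtain xb where sol: "is_solution X g ub xb"
    using usp by (auto simp: USP_def)
  have "H2 U X g (inv_limit_map T s) = (xb 0, xb 1)"
    using H2_past[OF input sol, of 1] inv_limit_map_past[OF orbit, of 0] s_past by simp
  moreover have "H2 U X g s = (xb (0 - 1), xb 0)"
    using H2_past[OF input sol, of 0] s_past by simp
  ultimately show ?thesis
    using induced_map_solution[OF SI orbit sol, of 0] by simp
qed

lemma continuous_on_H2:
  assumes "compact U" and "compact X"
  shows "continuous_on (left_seqs U) (H2 U X g)"
proof -
  have "continuous_on (left_seqs U) (rshift :: (nat \<Rightarrow> 'u) \<Rightarrow> _)"
    unfolding rshift_def
    by (intro continuous_on_coordinatewise_then_product continuous_on_subset[OF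
          continuous_on_product_coordinates subset_UNIV])
  moreover have "rshift ` left_seqs U \<subseteq> left_seqs U"
    by (auto simp: left_seqs_def rshift_def)
  ultimately have "continuous_on (left_seqs U) (\<lambda>s. hmap U X g (rshift s))"
    using continuous_on_compose2[OF continuous_on_hmap[OF assms]] by blast
  then show ?thesis
    unfolding H2_def using continuous_on_hmap[OF assms] by (rule continuous_on_Pair)
qed

lemma inj_on_H2:
  assumes SI: "SI_invertible U X g" and T_inj: "inj_on T U"
  shows "inj_on (H2 U X g) (inv_limit U T)"
proof (rule inj_onI)
  fix s s'
  assume s: "s \<in> inv_limit U T" and s': "s' \<in> inv_limit U T"
    and eq: "H2 U X g s = H2 U X g s'"
  have in_U: "s k \<in> U" "s' k \<in> U" and T_s: "T (s (Suc k)) = s k" "T (s' (Suc k)) = s' k" for k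
    using s s' by (auto simp: inv_limit_def)
  have r: "rshift s \<in> left_seqs U" "rshift s' \<in> left_seqs U"
    using in_U by (auto simp: left_seqs_def rshift_def)
  have "hmap U X g s = g (s 0) (hmap U X g (rshift s))"
    and "hmap U X g s' = g (s' 0) (hmap U X g (rshift s'))"
    using hmap_append_right[OF r(1) in_U(1)[of 0]] hmap_append_right[OF r(2) in_U(2)[of 0]]
    by (simp_all add: append_right_rshift)
  moreover have "hmap U X g (rshift s) = hmap U X g (rshift s')" and "hmap U X g s = hmap U X g s'"
    using eq by (simp_all add: H2_def)
  ultimately have "g (s 0) (hmap U X g (rshift s)) = g (s' 0) (hmap U X g (rshift s))"
    by simp
  then have "s 0 = s' 0"
    using SI hmap_in_X[OF r(1)] in_U unfolding SI_invertible_def inj_on_def by metis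
  then have "s k = s' k" for k
  proof (induction k)
    case (Suc k)
    then have "T (s (Suc k)) = T (s' (Suc k))"
      using T_s by simp
    then show ?case
      using T_inj in_U unfolding inj_on_def by blast
  qed
  then show "s = s'" by (rule ext)
qed

lemma top_semiconj_via_H2:
  assumes "compact U" and "compact X" and TU: "T ` U \<subseteq> U" and SI: "SI_invertible U X g"
  shows "top_semiconj_via (induced_rel U X g T) (induced_map U X g T)
    (inv_limit U T) (inv_limit_map T) (H2 U X g)"
  unfolding top_semiconj_via_def
  using continuous_on_subset[OF continuous_on_H2[OF assms(1,2)] inv_limit_subset_left_seqs]
    H2_image_inv_limit[OF TU] H2_inv_limit_map[OF TU SI] by blast

lemma top_conj_via_H2:
  assumes "compact U" and "compact X" and SI: "SI_invertible U X g"
    and T_hom: "homeomorphism U U T Tinv"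
  shows "top_conj_via (induced_rel U X g T) (induced_map U X g T)
    (inv_limit U T) (inv_limit_map T) (H2 U X g)"
proof -
  have TU: "T ` U \<subseteq> U"
    using T_hom by (simp add: homeomorphism_def)
  have compact: "compact (inv_limit U T)"
    using homeomorphism_inv_limit[OF T_hom] \<open>compact U\<close> homeomorphic_compactness homeomorphic_def
    by blast
  have "inj_on T U"
    using T_hom homeomorphism_apply1 inj_on_inverseI by metis
  moreover have "continuous_on (inv_limit U T) (H2 U X g)"
    using continuous_on_H2[OF assms(1,2)] inv_limit_subset_left_seqs by (rule continuous_on_subset)
  ultimately obtain \<psi> where "homeomorphism (inv_limit U T) (induced_rel U X g T) (H2 U X g) \<psi>"
    using homeomorphism_compact[OF compact _ H2_image_inv_limit[OF TU]] inj_on_H2[OF SI] by blast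
  then show ?thesis
    unfolding top_conj_via_def using H2_inv_limit_map[OF TU SI] by blast
qed

end

theorem theorem4:
  fixes U :: "'u::metric_space set" and X :: "'x::metric_space set"
    and T :: "'u \<Rightarrow> 'u" and g :: "'u \<Rightarrow> 'x \<Rightarrow> 'x"
  assumes "compact U" and "compact X"
    and "T ` U = U"
    and "driven_system U X g"
    and "SI_invertible U X g"
    and "USP U X g"
  shows "top_semiconj_via (induced_rel U X g T) (induced_map U X g T)
           (inv_limit U T) (inv_limit_map T) (H2 U X g)
       \<and> ((\<exists>Tinv. homeomorphism U U T Tinv) \<longrightarrow>
           top_conj_via (induced_rel U X g T) (induced_map U X g T)
             (inv_limit U T) (inv_limit_map T) (H2 U X g)
         \<and> (\<exists>\<phi>. top_conj_via (induced_rel U X g T) (induced_map U X g T) U T \<phi>)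
         \<and> causally_embeds U X g T)"
proof -
  interpret usp_system U X g
    using assms(4,6) by unfold_locales
  have TU: "T ` U \<subseteq> U"
    using assms(3) by simp
  have "top_conj_via (induced_rel U X g T) (induced_map U X g T) U T
      (H2 U X g \<circ> (\<lambda>u k. (Tinv ^^ k) u))"
    and "causally_embeds U X g T"
    if T_hom: "homeomorphism U U T Tinv" for Tinv
  proof -
    have conj: "top_conj_via (induced_rel U X g T) (induced_map U X g T)
        (inv_limit U T) (inv_limit_map T) (H2 U X g)"
      using assms(1,2,5) T_hom by (rule top_conj_via_H2)
    show "top_conj_via (induced_rel U X g T) (induced_map U X g T) U T
        (H2 U X g \<circ> (\<lambda>u k. (Tinv ^^ k) u))"
      using top_conj_via_compose[OF conj homeomorphism_inv_limit[OF T_hom]]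
        inv_limit_map_funpow_inverse[OF T_hom] by simp
    show "causally_embeds U X g T"
      using conj continuous_on_hmap[OF assms(1,2)] hmap_image_left_seqs hmap_append_right
        H2_image_inv_limit[OF TU]
      unfolding causally_embeds_def top_conj_via_def by auto
  qed
  then show ?thesis
    using top_semiconj_via_H2[OF assms(1,2) TU assms(5)] top_conj_via_H2[OF assms(1,2,5)] by blast
qed

end
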